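(* Under the standing setup in the context, there are constants $K\ge1$ and $C\ge0$ such that \[\frac1K\rho(x,y)-C\le\rho_\phi([x],[y])\le K\rho(x,y)+C\quad\text{for all }x,y\in X.\] Consequently the collapsing map $\phi:X\to X^*$, $\phi(x)=[x]$, is a quasi-isometry between $(X,\rho)$ and $(X^*,\rho_\phi)$.
   Context: A semi-metric on a set $Z$ is a function $d:Z\times Z\to[0,\infty)$ with $d(x,y)=0$ iff $x=y$ and $d(x,y)=d(y,x)$. For $b\ge1$, $c\ge0$, a $(b,c)$-metric is a semi-metric with $d(x,z)\le b(d(x,y)+d(y,z))+c$ for all $x,y,z$. A map $g$ from a $(b,c)$-metric space $(X,\rho)$ to a semi-metric space $(Y,\sigma)$ is a quasi-isometry if there are $K\ge1$, $C\ge0$ with $\frac1K\rho(x,y)-C\le\sigma(g(x),g(y))\le K\rho(x,y)+C$ for all $x,y$. Standing setup. $X$ is a topological space (in the paper an $n$-manifold) carrying a $(b,c)$-metric $\rho$. A collapsing set consists of: a subset $S\subseteq X$; a family $\mathcal F$ of pairwise disjoint nonempty subsets of $S$ ("fibers") whose union is $S$; and a subset $T\subseteq S$ meeting each fiber in exactly one point. The fibering is bounded: $f:=\sup_{F\in\mathcal F}\sup_{u,v\in F}\rho(u,v)<\infty$. For $a,a'\in T$, the length of a continuous path $\gamma:[0,1]\to T$ is $\ell(\gamma)=\sup\sum_{i=1}^k\rho(\gamma(t_{i-1}),\gamma(t_i))$ over partitions $0=t_0<\dots<t_k=1$, and $\rho_p(a,a')$ is the infimum of $\ell(\gamma)$ over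 continuous paths in $T$ from $a$ to $a'$. $T$ is a Lipschitz curve: there is $L\ge1$ with $\rho_p(a,a')\le L\,\rho(a,a')$ for all $a,a'\in T$. The collapsing relation is $x\sim y$ iff $x=y$ or $x,y$ lie in a common fiber; $X^*=X/\!\sim$, $\phi(x)=[x]$. For $x\in X$ let $r_x=\inf_{s\in S}\rho(x,s)$; assume this infimum is attained and fix $x_S\in S$ with $\rho(x,x_S)=r_x$, taking $x_S=x$ when $x\in S$. Let $x'$ denote the unique point of $T$ in the fiber containing $x_S$. The collapsed metric is $\rho_\phi([x],[y])=\rho(x,y)$ if $x,y\notin S$ and $\rho(x,y)\le r_x+r_y$, and $\rho_\phi([x],[y])=\rho_p(x',y')+r_x+r_y$ otherwise. *)

theory Defs
  imports "HOL-Analysis.Analysis" "HOL-Library.Extended_Real"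
begin

definition semi_metric :: "('a \<Rightarrow> 'a \<Rightarrow> real) \<Rightarrow> bool" where
  "semi_metric d \<longleftrightarrow> (\<forall>x y. d x y \<ge> 0 \<and> (d x y = 0 \<longleftrightarrow> x = y) \<and> d x y = d y x)"

definition bc_metric :: "real \<Rightarrow> real \<Rightarrow> ('a \<Rightarrow> 'a \<Rightarrow> real) \<Rightarrow> bool" where
  "bc_metric b c d \<longleftrightarrow> b \<ge> 1 \<and> c \<ge> 0 \<and> semi_metric d \<and>
     (\<forall>x y z. d x z \<le> b * (d x y + d y z) + c)"

definition quasi_isometry :: "'a set \<Rightarrow> ('a \<Rightarrow> 'a \<Rightarrow> real) \<Rightarrow> ('b \<Rightarrow> 'b \<Rightarrow> real) \<Rightarrow> ('a \<Rightarrow> 'b) \<Rightarrow> bool" where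
  "quasi_isometry X rho sg g \<longleftrightarrow> (\<exists>K C. K \<ge> 1 \<and> C \<ge> 0 \<and>
     (\<forall>x\<in>X. \<forall>y\<in>X. rho x y / K - C \<le> sg (g x) (g y) \<and> sg (g x) (g y) \<le> K * rho x y + C))"

definition partitions01 :: "(nat \<times> (nat \<Rightarrow> real)) set" where
  "partitions01 = {(k, t). k \<ge> 1 \<and> t 0 = 0 \<and> t k = 1 \<and> (\<forall>i<k. t i < t (Suc i))}"

definition path_length :: "('a \<Rightarrow> 'a \<Rightarrow> real) \<Rightarrow> (real \<Rightarrow> 'a) \<Rightarrow> ereal" where
  "path_length rho \<gamma> = (SUP p \<in> partitions01.
      ereal (\<Sum>i\<in>{1..fst p}. rho (\<gamma> (snd p (i - 1))) (\<gamma> (snd p i))))"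

definition rho_p :: "('a::topological_space \<Rightarrow> 'a \<Rightarrow> real) \<Rightarrow> 'a set \<Rightarrow> 'a \<Rightarrow> 'a \<Rightarrow> ereal" where
  "rho_p rho T a a' = (INF \<gamma> \<in> {\<gamma>. continuous_on {0..1} \<gamma> \<and> \<gamma> ` {0..1} \<subseteq> T \<and> \<gamma> 0 = a \<and> \<gamma> 1 = a'}.
      path_length rho \<gamma>)"

definition dist_to :: "('a \<Rightarrow> 'a \<Rightarrow> real) \<Rightarrow> 'a set \<Rightarrow> 'a \<Rightarrow> real" where
  "dist_to rho S x = Inf (rho x ` S)"

definition tpoint :: "'a set set \<Rightarrow> 'a set \<Rightarrow> ('a \<Rightarrow> 'a) \<Rightarrow> 'a \<Rightarrow> 'a" where
  "tpoint Fs T xS x = (THE t. t \<in> T \<and> (\<exists>F\<in>Fs. xS x \<in> F \<and> t \<in> F))"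

text \<open>Collapsed metric, written on representatives x, y of the classes [x], [y].\<close>
definition rho_phi :: "('a::topological_space \<Rightarrow> 'a \<Rightarrow> real) \<Rightarrow> 'a set \<Rightarrow> 'a set set \<Rightarrow> 'a set
     \<Rightarrow> ('a \<Rightarrow> 'a) \<Rightarrow> 'a \<Rightarrow> 'a \<Rightarrow> real" where
  "rho_phi rho S Fs T xS x y =
     (if x \<notin> S \<and> y \<notin> S \<and> rho x y \<le> dist_to rho S x + dist_to rho S y then rho x y
      else real_of_ereal (rho_p rho T (tpoint Fs T xS x) (tpoint Fs T xS y))
           + dist_to rho S x + dist_to rho S y)"

definition collapse_rel :: "'a set set \<Rightarrow> ('a \<times> 'a) set" where
  "collapse_rel Fs = {(x, y). x = y \<or> (\<exists>F\<in>Fs. x \<in> F \<and> y \<in> F)}"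

definition collapse_map :: "'a set set \<Rightarrow> 'a \<Rightarrow> 'a set" where
  "collapse_map Fs x = collapse_rel Fs `` {x}"

definition rho_star :: "('a::topological_space \<Rightarrow> 'a \<Rightarrow> real) \<Rightarrow> 'a set \<Rightarrow> 'a set set \<Rightarrow> 'a set
     \<Rightarrow> ('a \<Rightarrow> 'a) \<Rightarrow> 'a set \<Rightarrow> 'a set \<Rightarrow> real" where
  "rho_star rho S Fs T xS A B =
     rho_phi rho S Fs T xS (SOME x. A = collapse_map Fs x) (SOME y. B = collapse_map Fs y)"

end

theory Submission
  imports Defs
begin

text \<open>Iterating the quasi-triangle inequality of a \<open>(b,c)\<close>-metric along a chain of fixed
length only costs multiplicative and additive constants, so it suffices to compare \<open>\<rho>\<close> and
\<open>\<rho>\<^sub>\<phi>\<close> along the chains \<open>x', x\<^sub>S, x, y, y\<^sub>S, y'\<close> and \<open>x, x\<^sub>S, x', y', y\<^sub>S, y\<close>. The outer steps are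
bounded by the fiber diameter, the steps to \<open>x\<^sub>S\<close> cost \<open>r\<^sub>x\<close>, the path metric on \<open>T\<close> is
bi-Lipschitz to \<open>\<rho>\<close>, and whenever \<open>\<rho>\<^sub>\<phi>\<close> uses the path metric we have \<open>r\<^sub>x + r\<^sub>y \<le> \<rho>(x,y)\<close>.
The metric on classes evaluates \<open>\<rho>\<^sub>\<phi>\<close> at chosen representatives, which lie in the fiber of
the given points; moving both arguments of \<open>\<rho>\<close> a bounded distance changes it only coarsely.\<close>

definition coarsely_dominated :: "('a \<Rightarrow> 'a \<Rightarrow> real) \<Rightarrow> ('a \<Rightarrow> 'a \<Rightarrow> real) \<Rightarrow> bool" where
  "coarsely_dominated d e \<longleftrightarrow> (\<exists>K C. K \<ge> 1 \<and> C \<ge> 0 \<and> (\<forall>x y. d x y \<le> K * e x y + C))"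

lemma coarsely_dominatedI:
  assumes "K \<ge> 1" "C \<ge> 0" "\<And>x y. d x y \<le> K * e x y + C"
  shows "coarsely_dominated d e"
  using assms unfolding coarsely_dominated_def by blast

lemma coarsely_dominated_trans:
  assumes "coarsely_dominated d e" "coarsely_dominated e g"
  shows "coarsely_dominated d g"
proof -
  obtain K C where K: "K \<ge> 1" "C \<ge> 0" and de: "\<And>x y. d x y \<le> K * e x y + C"
    using assms(1) unfolding coarsely_dominated_def by blast
  obtain K' C' where K': "K' \<ge> 1" "C' \<ge> 0" and eg: "\<And>x y. e x y \<le> K' * g x y + C'"
    using assms(2) unfolding coarsely_dominated_def by blast
  show ?thesis
  proof (rule coarsely_dominatedI)
    fix x y
    have "d x y \<le> K * (K' * g x y + C') + C"
      using de[of x y] eg[of x y] K by (smt (verit) mult_left_mono)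
    then show "d x y \<le> K * K' * g x y + (K * C' + C)" by (simp add: algebra_simps)
  qed (use K K' mult_mono[of 1 K 1 K'] in auto)
qed

lemma coarsely_dominated_compose:
  "coarsely_dominated d e \<Longrightarrow> coarsely_dominated (\<lambda>x y. d (p x) (p y)) (\<lambda>x y. e (p x) (p y))"
  unfolding coarsely_dominated_def by blast

lemma quasi_isometric_bounds_if_coarsely_dominated:
  assumes "coarsely_dominated d e" "coarsely_dominated e d"
    and "\<And>x y. 0 \<le> d x y" "\<And>x y. 0 \<le> e x y"
  shows "\<exists>K C. K \<ge> 1 \<and> C \<ge> 0 \<and> (\<forall>x y. d x y / K - C \<le> e x y \<and> e x y \<le> K * d x y + C)"
proof -
  obtain K1 C1 where "K1 \<ge> 1" "C1 \<ge> 0" and de: "\<And>x y. d x y \<le> K1 * e x y + C1"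
    using assms(1) unfolding coarsely_dominated_def by blast
  obtain K2 C2 where "K2 \<ge> 1" "C2 \<ge> 0" and ed: "\<And>x y. e x y \<le> K2 * d x y + C2"
    using assms(2) unfolding coarsely_dominated_def by blast
  define K where "K = max K1 K2"
  define C where "C = max C1 C2"
  have K: "K \<ge> 1" and C: "C \<ge> 0"
    using \<open>K1 \<ge> 1\<close> \<open>C1 \<ge> 0\<close> unfolding K_def C_def by auto
  have "d x y / K - C \<le> e x y \<and> e x y \<le> K * d x y + C" for x y
  proof
    have "d x y \<le> K * e x y + C"
      using de[of x y] mult_right_mono[of K1 K "e x y"] assms(4)[of x y]
      unfolding K_def C_def by fastforce
    also have "\<dots> \<le> K * (e x y + C)"
      using mult_right_mono[OF K C] by (simp add: algebra_simps)
    finally show "d x y / K - C \<le> e x y"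
      using K by (simp add: field_simps)
    show "e x y \<le> K * d x y + C"
      using ed[of x y] mult_right_mono[of K2 K "d x y"] assms(3)[of x y]
      unfolding K_def C_def by fastforce
  qed
  with K C show ?thesis by blast
qed

lemma bc_metric_nonneg: "bc_metric b c rho \<Longrightarrow> 0 \<le> rho x y"
  and bc_metric_self: "bc_metric b c rho \<Longrightarrow> rho x x = 0"
  and bc_metric_commute: "bc_metric b c rho \<Longrightarrow> rho x y = rho y x"
  and bc_metric_triangle: "bc_metric b c rho \<Longrightarrow> rho x z \<le> b * (rho x y + rho y z) + c"
  unfolding bc_metric_def semi_metric_def by metis+

lemma bc_metric_chain:
  assumes "bc_metric b c rho"
  shows "\<exists>B C. B \<ge> 1 \<and> C \<ge> 0 \<and>
    (\<forall>p. rho (p 0) (p n) \<le> B * (\<Sum>i<n. rho (p i) (p (Suc i))) + C)"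
proof (induction n)
  case 0
  then show ?case
    using bc_metric_self[OF assms]
    by (metis lessThan_0 sum.empty mult_zero_right add_0 order_refl)
next
  case (Suc n)
  then obtain B C where B: "B \<ge> 1" and C: "C \<ge> 0"
    and chain: "\<forall>p. rho (p 0) (p n) \<le> B * (\<Sum>i<n. rho (p i) (p (Suc i))) + C" by blast
  have b: "b \<ge> 1" and c: "c \<ge> 0"
    using assms by (auto simp: bc_metric_def)
  show ?case
  proof (rule exI[of _ "b * B"], rule exI[of _ "b * C + c"], intro conjI allI)
    fix p
    let ?s = "\<Sum>i<n. rho (p i) (p (Suc i))" and ?l = "rho (p n) (p (Suc n))"
    have "rho (p 0) (p (Suc n)) \<le> b * (rho (p 0) (p n) + ?l) + c"
      by (rule bc_metric_triangle[OF assms])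
    also have "\<dots> \<le> b * (B * ?s + C + B * ?l) + c"
    proof -
      have "?l \<le> B * ?l"
        using B bc_metric_nonneg[OF assms, of "p n" "p (Suc n)"] by (simp add: mult_le_cancel_right1)
      then show ?thesis using chain b by (intro add_right_mono mult_left_mono) (auto intro: add_mono)
    qed
    also have "\<dots> = b * B * (\<Sum>i<Suc n. rho (p i) (p (Suc i))) + (b * C + c)"
      by (simp add: algebra_simps)
    finally show "rho (p 0) (p (Suc n)) \<le> b * B * (\<Sum>i<Suc n. rho (p i) (p (Suc i))) + (b * C + c)" .
  qed (use b c B C mult_mono[of 1 b 1 B] in auto)
qed

lemma bc_metric_chain5:
  assumes "bc_metric b c rho"
  shows "\<exists>B C. B \<ge> 1 \<and> C \<ge> 0 \<and> (\<forall>p0 p1 p2 p3 p4 p5. rho p0 p5 \<le>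
     B * (rho p0 p1 + rho p1 p2 + rho p2 p3 + rho p3 p4 + rho p4 p5) + C)"
proof -
  obtain B C where "B \<ge> 1" "C \<ge> 0"
    and chain: "\<forall>p. rho (p 0) (p 5) \<le> B * (\<Sum>i<5. rho (p i) (p (Suc i))) + C"
    using bc_metric_chain[OF assms, of 5] by blast
  have "rho p0 p5 \<le> B * (rho p0 p1 + rho p1 p2 + rho p2 p3 + rho p3 p4 + rho p4 p5) + C"
    for p0 p1 p2 p3 p4 p5
    using chain[rule_format, of "\<lambda>i. [p0, p1, p2, p3, p4, p5] ! i"]
    by (simp add: eval_nat_numeral add.assoc)
  with \<open>B \<ge> 1\<close> \<open>C \<ge> 0\<close> show ?thesis by blast
qed

lemma bc_metric_coarsely_dominated_perturb:
  assumes bc: "bc_metric b c rho" and close: "\<And>x. rho x (p x) \<le> f"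
  shows "coarsely_dominated (\<lambda>x y. rho (p x) (p y)) rho"
    and "coarsely_dominated rho (\<lambda>x y. rho (p x) (p y))"
proof -
  obtain B C where B: "B \<ge> 1" and C: "C \<ge> 0"
    and chain: "\<forall>q. rho (q 0) (q 3) \<le> B * (\<Sum>i<3. rho (q i) (q (Suc i))) + C"
    using bc_metric_chain[OF bc, of 3] by blast
  have chain3: "\<And>s t u v. rho s v \<le> B * (rho s t + rho t u + rho u v) + C"
    using chain[rule_format, of "\<lambda>i. [_, _, _, _] ! i"] by (simp add: eval_nat_numeral add.assoc)
  have f: "f \<ge> 0"
    using order_trans[OF bc_metric_nonneg[OF bc] close] .
  have close': "rho (p x) x \<le> f" for x
    using close bc_metric_commute[OF bc] by metis
  have C': "2 * B * f + C \<ge> 0" using B C f by simp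
  show "coarsely_dominated (\<lambda>x y. rho (p x) (p y)) rho"
  proof (rule coarsely_dominatedI[OF B C'])
    fix x y
    have "rho (p x) (p y) \<le> B * (rho (p x) x + rho x y + rho y (p y)) + C"
      by (rule chain3)
    also have "\<dots> \<le> B * (f + rho x y + f) + C"
      using close'[of x] close[of y] B by (intro add_right_mono mult_left_mono add_mono) auto
    finally show "rho (p x) (p y) \<le> B * rho x y + (2 * B * f + C)"
      by (simp add: algebra_simps)
  qed
  show "coarsely_dominated rho (\<lambda>x y. rho (p x) (p y))"
  proof (rule coarsely_dominatedI[OF B C'])
    fix x y
    have "rho x y \<le> B * (rho x (p x) + rho (p x) (p y) + rho (p y) y) + C"
      by (rule chain3)
    also have "\<dots> \<le> B * (f + rho (p x) (p y) + f) + C"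
      using close[of x] close'[of y] B by (intro add_right_mono mult_left_mono add_mono) auto
    finally show "rho x y \<le> B * rho (p x) (p y) + (2 * B * f + C)"
      by (simp add: algebra_simps)
  qed
qed

lemma dist_to_le:
  assumes "\<And>s. s \<in> S \<Longrightarrow> 0 \<le> d x s" "s \<in> S"
  shows "dist_to d S x \<le> d x s"
  unfolding dist_to_def using assms by (intro cInf_lower bdd_belowI[where m = 0]) auto

lemma path_length_ge_endpoints: "ereal (rho (\<gamma> 0) (\<gamma> 1)) \<le> path_length rho \<gamma>"
proof -
  have "(1, real) \<in> partitions01" by (simp add: partitions01_def)
  then show ?thesis
    unfolding path_length_def by (rule SUP_upper2) simp
qed

lemma rho_p_ge: "ereal (rho a a') \<le> rho_p rho T a a'"
  unfolding rho_p_def using path_length_ge_endpoints by (intro INF_greatest) fastforce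

lemma mem_collapse_map_iff: "y \<in> collapse_map Fs x \<longleftrightarrow> y = x \<or> (\<exists>F\<in>Fs. x \<in> F \<and> y \<in> F)"
  unfolding collapse_map_def collapse_rel_def by auto

lemma collapse_map_eq_imp_fiber:
  assumes "collapse_map Fs x = collapse_map Fs z"
  shows "z = x \<or> (\<exists>F\<in>Fs. x \<in> F \<and> z \<in> F)"
  using assms mem_collapse_map_iff[of z Fs] by auto

definition collapse_rep :: "'a set set \<Rightarrow> 'a \<Rightarrow> 'a" where
  "collapse_rep Fs x = (SOME z. collapse_map Fs x = collapse_map Fs z)"

lemma collapse_rep_in_fiber: "collapse_rep Fs x = x \<or> (\<exists>F\<in>Fs. x \<in> F \<and> collapse_rep Fs x \<in> F)"
  unfolding collapse_rep_def by (rule collapse_map_eq_imp_fiber, rule someI[of _ x]) (rule refl)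

lemma rho_star_collapse_map:
  "rho_star rho S Fs T xS (collapse_map Fs x) (collapse_map Fs y)
     = rho_phi rho S Fs T xS (collapse_rep Fs x) (collapse_rep Fs y)"
  unfolding rho_star_def collapse_rep_def by (simp add: eq_commute)

locale collapsing_set =
  fixes rho :: "'a::topological_space \<Rightarrow> 'a \<Rightarrow> real"
    and b c :: real
    and S T :: "'a set"
    and Fs :: "'a set set"
    and xS :: "'a \<Rightarrow> 'a"
  assumes bc: "bc_metric b c rho"
    and fibers_cover: "\<Union>Fs = S"
    and fibers_disj: "\<forall>F\<in>Fs. \<forall>G\<in>Fs. F \<noteq> G \<longrightarrow> F \<inter> G = {}"
    and T_fiber: "\<forall>F\<in>Fs. \<exists>!t. t \<in> T \<inter> F"
    and bounded: "\<exists>f. \<forall>F\<in>Fs. \<forall>u\<in>F. \<forall>v\<in>F. rho u v \<le> f"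
    and lipschitz: "\<exists>L\<ge>1. \<forall>a\<in>T. \<forall>a'\<in>T. rho_p rho T a a' \<le> ereal (L * rho a a')"
    and xS_in: "\<forall>x. xS x \<in> S"
    and xS_min: "\<forall>x. rho x (xS x) = dist_to rho S x"
    and xS_id: "\<forall>x\<in>S. xS x = x"
begin

abbreviation r :: "'a \<Rightarrow> real" where "r \<equiv> dist_to rho S"
abbreviation proj :: "'a \<Rightarrow> 'a" where "proj \<equiv> tpoint Fs T xS"
abbreviation path_dist :: "'a \<Rightarrow> 'a \<Rightarrow> real" where
  "path_dist x y \<equiv> real_of_ereal (rho_p rho T (proj x) (proj y))"
abbreviation dphi :: "'a \<Rightarrow> 'a \<Rightarrow> real" where "dphi \<equiv> rho_phi rho S Fs T xS"

lemmas nonneg = bc_metric_nonneg[OF bc]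
  and commute = bc_metric_commute[OF bc]

definition fiber_bound :: real where
  "fiber_bound = (SOME f. 0 \<le> f \<and> (\<forall>F\<in>Fs. \<forall>u\<in>F. \<forall>v\<in>F. rho u v \<le> f))"

lemma fiber_bound: "0 \<le> fiber_bound" "\<forall>F\<in>Fs. \<forall>u\<in>F. \<forall>v\<in>F. rho u v \<le> fiber_bound"
proof -
  obtain f where f: "\<forall>F\<in>Fs. \<forall>u\<in>F. \<forall>v\<in>F. rho u v \<le> f" using bounded by blast
  have "\<exists>f. 0 \<le> f \<and> (\<forall>F\<in>Fs. \<forall>u\<in>F. \<forall>v\<in>F. rho u v \<le> f)"
    using f by (intro exI[of _ "max f 0"]) (auto intro: max.coboundedI1)
  from someI_ex[OF this]
  show "0 \<le> fiber_bound" "\<forall>F\<in>Fs. \<forall>u\<in>F. \<forall>v\<in>F. rho u v \<le> fiber_bound"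
    unfolding fiber_bound_def by blast+
qed

definition lipschitz_const :: real where
  "lipschitz_const = (SOME L. L \<ge> 1 \<and> (\<forall>a\<in>T. \<forall>a'\<in>T. rho_p rho T a a' \<le> ereal (L * rho a a')))"

lemma lipschitz_const: "1 \<le> lipschitz_const"
  "\<forall>a\<in>T. \<forall>a'\<in>T. rho_p rho T a a' \<le> ereal (lipschitz_const * rho a a')"
  using someI_ex[OF lipschitz] unfolding lipschitz_const_def by blast+

lemma r_eq: "r x = rho x (xS x)"
  using xS_min by simp

lemma r_nonneg: "0 \<le> r x"
  using r_eq nonneg by simp

lemma r_le: "s \<in> S \<Longrightarrow> r x \<le> rho x s"
  by (rule dist_to_le) (rule nonneg)

lemma r_zero: "x \<in> S \<Longrightarrow> r x = 0"
  using r_eq xS_id bc_metric_self[OF bc] by simp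

lemma proj_in_fiber: "proj x \<in> T \<and> (\<exists>F\<in>Fs. xS x \<in> F \<and> proj x \<in> F)"
proof -
  obtain F where F: "F \<in> Fs" "xS x \<in> F" using xS_in fibers_cover by blast
  have unique: "\<exists>!t. t \<in> T \<inter> F" using T_fiber F(1) by blast
  then obtain t where t: "t \<in> T \<inter> F" by blast
  have "\<exists>!t. t \<in> T \<and> (\<exists>F\<in>Fs. xS x \<in> F \<and> t \<in> F)"
  proof (rule ex1I[of _ t])
    fix t' assume "t' \<in> T \<and> (\<exists>F\<in>Fs. xS x \<in> F \<and> t' \<in> F)"
    then obtain G where G: "G \<in> Fs" "xS x \<in> G" "t' \<in> G" "t' \<in> T" by blast
    have "G = F" using fibers_disj F G by blast
    with G t unique show "t' = t" by blast
  qed (use t F in blast)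
  then show ?thesis unfolding tpoint_def by (rule theI')
qed

lemma path_dist_bounds:
  "rho (proj x) (proj y) \<le> path_dist x y" "path_dist x y \<le> lipschitz_const * rho (proj x) (proj y)"
proof -
  have "rho_p rho T (proj x) (proj y) \<le> ereal (lipschitz_const * rho (proj x) (proj y))"
    using lipschitz_const(2) proj_in_fiber by blast
  then show "rho (proj x) (proj y) \<le> path_dist x y" "path_dist x y \<le> lipschitz_const * rho (proj x) (proj y)"
    using rho_p_ge[of rho "proj x" "proj y" T] by (cases "rho_p rho T (proj x) (proj y)"; simp)+
qed

lemma dphi_near: "x \<notin> S \<Longrightarrow> y \<notin> S \<Longrightarrow> rho x y \<le> r x + r y \<Longrightarrow> dphi x y = rho x y"
  unfolding rho_phi_def by simp

lemma dphi_far: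
  assumes "\<not> (x \<notin> S \<and> y \<notin> S \<and> rho x y \<le> r x + r y)"
  shows "dphi x y = path_dist x y + r x + r y" and "r x + r y \<le> rho x y"
proof -
  show "dphi x y = path_dist x y + r x + r y"
    using assms unfolding rho_phi_def by auto
  show "r x + r y \<le> rho x y"
  proof (cases "x \<in> S")
    case True
    then show ?thesis using r_zero[of x] r_le[of x y] commute[of x y] by simp
  next
    case False
    then show ?thesis using assms r_zero[of y] r_le[of y x] by auto
  qed
qed

lemma proj_close: "rho (xS x) (proj x) \<le> fiber_bound" "rho (proj x) (xS x) \<le> fiber_bound"
  using fiber_bound(2) proj_in_fiber[of x] by blast+

lemma dphi_nonneg: "0 \<le> dphi x y"
proof (cases "x \<notin> S \<and> y \<notin> S \<and> rho x y \<le> r x + r y")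
  case True
  then show ?thesis using dphi_near nonneg by simp
next
  case False
  then show ?thesis
    using dphi_far(1)[OF False] path_dist_bounds(1)[of x y] nonneg[of "proj x" "proj y"]
      r_nonneg[of x] r_nonneg[of y]
    by linarith
qed

lemma dphi_coarsely_dominated_by_rho: "coarsely_dominated dphi rho"
proof -
  define f where "f = fiber_bound"
  define L where "L = lipschitz_const"
  have f: "f \<ge> 0" and L: "L \<ge> 1"
    using fiber_bound(1) lipschitz_const(1) by (simp_all add: f_def L_def)
  obtain B C where B: "B \<ge> 1" and C: "C \<ge> 0" and chain: "\<forall>p0 p1 p2 p3 p4 p5. rho p0 p5 \<le>
     B * (rho p0 p1 + rho p1 p2 + rho p2 p3 + rho p3 p4 + rho p4 p5) + C"
    using bc_metric_chain5[OF bc] by blast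
  show ?thesis
  proof (rule coarsely_dominatedI)
    fix x y
    show "dphi x y \<le> (2 * L * B + 1) * rho x y + L * (2 * B * f + C)"
    proof (cases "x \<notin> S \<and> y \<notin> S \<and> rho x y \<le> r x + r y")
      case True
      have "0 \<le> 2 * L * B * rho x y" "0 \<le> L * (2 * B * f + C)"
        using L B C f nonneg[of x y] by simp_all
      then show ?thesis using dphi_near True by (simp add: algebra_simps)
    next
      case False
      note far = dphi_far[OF False]
      have "rho (proj x) (proj y) \<le> B * (rho (proj x) (xS x) + rho (xS x) x + rho x y
          + rho y (xS y) + rho (xS y) (proj y)) + C"
        using chain by blast
      also have "\<dots> \<le> B * (2 * f + 2 * rho x y) + C"
      proof -
        have "rho (proj x) (xS x) + rho (xS x) x + rho x y + rho y (xS y) + rho (xS y) (proj y)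
            \<le> 2 * f + 2 * rho x y"
          using proj_close(2)[of x] proj_close(1)[of y] r_eq[of x] r_eq[of y] commute[of x "xS x"] far(2)
          unfolding f_def by linarith
        then show ?thesis using B by (intro add_right_mono mult_left_mono) auto
      qed
      finally have proj_bound: "rho (proj x) (proj y) \<le> B * (2 * f + 2 * rho x y) + C" .
      have "dphi x y \<le> L * rho (proj x) (proj y) + rho x y"
        using far path_dist_bounds(2)[of x y] unfolding L_def by linarith
      also have "\<dots> \<le> L * (B * (2 * f + 2 * rho x y) + C) + rho x y"
        using proj_bound L by (simp add: mult_left_mono)
      also have "\<dots> = (2 * L * B + 1) * rho x y + L * (2 * B * f + C)"
        by (simp add: algebra_simps)
      finally show ?thesis .
    qed
  qed (use L B C f in simp_all)
qed

lemma rho_coarsely_dominated_by_dphi: "coarsely_dominated rho dphi"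
proof -
  define f where "f = fiber_bound"
  have f: "f \<ge> 0" using fiber_bound(1) by (simp add: f_def)
  obtain B C where B: "B \<ge> 1" and C: "C \<ge> 0" and chain: "\<forall>p0 p1 p2 p3 p4 p5. rho p0 p5 \<le>
     B * (rho p0 p1 + rho p1 p2 + rho p2 p3 + rho p3 p4 + rho p4 p5) + C"
    using bc_metric_chain5[OF bc] by blast
  show ?thesis
  proof (rule coarsely_dominatedI[OF B])
    fix x y
    show "rho x y \<le> B * dphi x y + (2 * B * f + C)"
    proof (cases "x \<notin> S \<and> y \<notin> S \<and> rho x y \<le> r x + r y")
      case True
      have "dphi x y \<le> B * dphi x y" "0 \<le> 2 * B * f + C"
        using B C f dphi_nonneg[of x y] by (simp_all add: mult_le_cancel_right1)
      then show ?thesis using dphi_near True by simp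
    next
      case False
      have "rho x y \<le> B * (rho x (xS x) + rho (xS x) (proj x) + rho (proj x) (proj y)
          + rho (proj y) (xS y) + rho (xS y) y) + C"
        using chain by blast
      also have "\<dots> \<le> B * (dphi x y + 2 * f) + C"
      proof -
        have "rho x (xS x) + rho (xS x) (proj x) + rho (proj x) (proj y) + rho (proj y) (xS y)
            + rho (xS y) y \<le> dphi x y + 2 * f"
          using proj_close(1)[of x] proj_close(2)[of y] r_eq[of x] r_eq[of y] commute[of y "xS y"]
            dphi_far(1)[OF False] path_dist_bounds(1)[of x y]
          unfolding f_def by linarith
        then show ?thesis using B by (intro add_right_mono mult_left_mono) auto
      qed
      finally show ?thesis by (simp add: algebra_simps)
    qed
  qed (use B C f in simp)
qed

lemma dphi_collapse_rep_coarse_bounds: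
  shows "coarsely_dominated (\<lambda>x y. dphi (collapse_rep Fs x) (collapse_rep Fs y)) rho"
    and "coarsely_dominated rho (\<lambda>x y. dphi (collapse_rep Fs x) (collapse_rep Fs y))"
proof -
  have close: "rho x (collapse_rep Fs x) \<le> fiber_bound" for x
    using collapse_rep_in_fiber[of Fs x] bc_metric_self[OF bc] fiber_bound by auto
  note perturb = bc_metric_coarsely_dominated_perturb[OF bc close]
  show "coarsely_dominated (\<lambda>x y. dphi (collapse_rep Fs x) (collapse_rep Fs y)) rho"
    using coarsely_dominated_compose[OF dphi_coarsely_dominated_by_rho] perturb(1)
    by (rule coarsely_dominated_trans)
  show "coarsely_dominated rho (\<lambda>x y. dphi (collapse_rep Fs x) (collapse_rep Fs y))"
    using perturb(2) coarsely_dominated_compose[OF rho_coarsely_dominated_by_dphi]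
    by (rule coarsely_dominated_trans)
qed

theorem collapse_map_quasi_isometry:
  shows "\<exists>K C. K \<ge> 1 \<and> C \<ge> 0 \<and> (\<forall>x y. rho x y / K - C \<le> dphi x y \<and> dphi x y \<le> K * rho x y + C)"
    and "quasi_isometry UNIV rho (rho_star rho S Fs T xS) (collapse_map Fs)"
proof -
  show "\<exists>K C. K \<ge> 1 \<and> C \<ge> 0 \<and> (\<forall>x y. rho x y / K - C \<le> dphi x y \<and> dphi x y \<le> K * rho x y + C)"
    using rho_coarsely_dominated_by_dphi dphi_coarsely_dominated_by_rho nonneg dphi_nonneg
    by (rule quasi_isometric_bounds_if_coarsely_dominated)
  have "\<exists>K C. K \<ge> 1 \<and> C \<ge> 0 \<and> (\<forall>x y. rho x y / K - C \<le> dphi (collapse_rep Fs x) (collapse_rep Fs y)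
      \<and> dphi (collapse_rep Fs x) (collapse_rep Fs y) \<le> K * rho x y + C)"
    using dphi_collapse_rep_coarse_bounds(2,1) nonneg dphi_nonneg
    by (rule quasi_isometric_bounds_if_coarsely_dominated)
  then show "quasi_isometry UNIV rho (rho_star rho S Fs T xS) (collapse_map Fs)"
    by (simp add: quasi_isometry_def rho_star_collapse_map)
qed

end

theorem mainTheorem9:
  fixes rho :: "'a::topological_space \<Rightarrow> 'a \<Rightarrow> real"
    and b c :: real
    and S T :: "'a set"
    and Fs :: "'a set set"
    and xS :: "'a \<Rightarrow> 'a"
  assumes bc: "bc_metric b c rho"
    and fibers_sub: "\<Union>Fs = S"
    and fibers_disj: "\<forall>F\<in>Fs. \<forall>G\<in>Fs. F \<noteq> G \<longrightarrow> F \<inter> G = {}"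
    and fibers_ne: "\<forall>F\<in>Fs. F \<noteq> {}"
    and T_sub: "T \<subseteq> S"
    and T_fiber: "\<forall>F\<in>Fs. \<exists>!t. t \<in> T \<inter> F"
    and bounded: "\<exists>f. \<forall>F\<in>Fs. \<forall>u\<in>F. \<forall>v\<in>F. rho u v \<le> f"
    and lipschitz: "\<exists>L\<ge>1. \<forall>a\<in>T. \<forall>a'\<in>T. rho_p rho T a a' \<le> ereal (L * rho a a')"
    and xS_in: "\<forall>x. xS x \<in> S"
    and xS_min: "\<forall>x. rho x (xS x) = dist_to rho S x"
    and xS_id: "\<forall>x\<in>S. xS x = x"
  shows "(\<exists>K C. K \<ge> 1 \<and> C \<ge> 0 \<and> (\<forall>x y.
            rho x y / K - C \<le> rho_phi rho S Fs T xS x y \<and>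
            rho_phi rho S Fs T xS x y \<le> K * rho x y + C))
       \<and> quasi_isometry UNIV rho (rho_star rho S Fs T xS) (collapse_map Fs)"
proof -
  interpret collapsing_set rho b c S T Fs xS
    using bc fibers_sub fibers_disj T_fiber bounded lipschitz xS_in xS_min xS_id
    by unfold_locales
  show ?thesis using collapse_map_quasi_isometry by (rule conjI)
qed

end
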